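(* Let $0<H<1$, let $B_H$ be a fractional Brownian motion on $[0,1]$ with Hurst parameter $H$, and let $\|\cdot\|$ be a norm on the H\"older space $C_0^\gamma[0,1]$ for some $0<\gamma<H$ such that there are constants $\theta,C_1,C_2>0$ with \[ -C_1\varepsilon^{-\theta}\le \log \mathbb{P}\big[\|B_H\|\le \varepsilon\big]\le -C_2\varepsilon^{-\theta},\qquad \varepsilon\in(0,1]. \] Let $\eta_k(H)=\mathbb{E}\big[\|B_H\|^{-k}\big]$. Then $\eta_k(H)=k^{k/\theta+o(k)}$ as $k\uparrow\infty$. *)

theory Defs
  imports "HOL-Probability.Probability"
begin

definition fbm_cov :: "real \<Rightarrow> real \<Rightarrow> real \<Rightarrow> real" where
  "fbm_cov H s t = (s powr (2*H) + t powr (2*H) - \<bar>t - s\<bar> powr (2*H)) / 2"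

definition centered_gaussian_process ::
  "'a measure \<Rightarrow> (real \<Rightarrow> 'a \<Rightarrow> real) \<Rightarrow> real set \<Rightarrow> (real \<Rightarrow> real \<Rightarrow> real) \<Rightarrow> bool" where
  "centered_gaussian_process M X T R \<longleftrightarrow>
     (\<forall>t\<in>T. X t \<in> borel_measurable M) \<and>
     (\<forall>F a. finite F \<and> F \<subseteq> T \<longrightarrow>
        (let v = (\<Sum>s\<in>F. \<Sum>t\<in>F. a s * a t * R s t) in
          (if v = 0 then (AE \<omega> in M. (\<Sum>t\<in>F. a t * X t \<omega>) = 0)
           else distributed M lborel (\<lambda>\<omega>. \<Sum>t\<in>F. a t * X t \<omega>) (normal_density 0 (sqrt v)))))"

definition fbm :: "'a measure \<Rightarrow> real \<Rightarrow> (real \<Rightarrow> 'a \<Rightarrow> real) \<Rightarrow> bool" where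
  "fbm M H B \<longleftrightarrow> prob_space M \<and> centered_gaussian_process M B {0..1} (fbm_cov H)"

text \<open>Hoelder space C_0^gamma[0,1]: gamma-Hoelder functions on [0,1] vanishing at 0
  (represented extensionally: zero outside [0,1]).\<close>
definition holder0 :: "real \<Rightarrow> (real \<Rightarrow> real) set" where
  "holder0 \<gamma> = {f. f 0 = 0 \<and> (\<forall>t. t \<notin> {0..1} \<longrightarrow> f t = 0) \<and>
      (\<exists>C. \<forall>s\<in>{0..1}. \<forall>t\<in>{0..1}. \<bar>f s - f t\<bar> \<le> C * \<bar>s - t\<bar> powr \<gamma>)}"

definition is_norm_on :: "(real \<Rightarrow> real) set \<Rightarrow> ((real \<Rightarrow> real) \<Rightarrow> real) \<Rightarrow> bool" where
  "is_norm_on V N \<longleftrightarrow>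
     (\<forall>f\<in>V. N f \<ge> 0) \<and>
     (\<forall>f\<in>V. N f = 0 \<longleftrightarrow> f = (\<lambda>t. 0)) \<and>
     (\<forall>c. \<forall>f\<in>V. N (\<lambda>t. c * f t) = \<bar>c\<bar> * N f) \<and>
     (\<forall>f\<in>V. \<forall>g\<in>V. N (\<lambda>t. f t + g t) \<le> N f + N g)"

definition path01 :: "(real \<Rightarrow> 'a \<Rightarrow> real) \<Rightarrow> 'a \<Rightarrow> real \<Rightarrow> real" where
  "path01 B \<omega> = (\<lambda>t. if t \<in> {0..1} then B t \<omega> else 0)"

end

theory Submission
  imports Defs "HOL-Real_Asymp.Real_Asymp"
begin

(* Only the small-ball estimates for X = N(B_H) are used; the remaining hypotheses
   merely make them meaningful. Markov's inequality E[X^-k] >= eps^-k P(X <= eps) with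
   eps = k^(-1/theta) gives E[X^-k] >= k^(k/theta) e^(-C1 k). Conversely, maximising
   u^k exp(-c u^theta) over u > 0 gives X^-k <= (k/(c theta))^(k/theta) exp(c X^-theta),
   and for c < C2 the upper small-ball estimate makes exp(c X^-theta) integrable.
   Hence ln E[X^-k] = (k/theta) ln k + O(k): the exponent of k is k/theta + O(k / ln k). *)

lemma powr_mult_exp_neg_powr_le:
  fixes u k c \<theta> :: real
  assumes "0 < u" "0 < k" "0 < c" "0 < \<theta>"
  shows "u powr k * exp (- c * u powr \<theta>) \<le> (k / (c * \<theta>)) powr (k / \<theta>)"
proof -
  define v where "v = u powr \<theta>"
  define a where "a = c * \<theta> / k"
  have "0 < v" "0 < a" using assms by (simp_all add: v_def a_def)
  have "a * v \<le> exp (a * v)"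
    using exp_ge_add_one_self[of "a * v"] by linarith
  then have "v * exp (- (a * v)) \<le> 1 / a"
    using \<open>0 < a\<close> by (simp add: exp_minus field_simps)
  then have "(v * exp (- (a * v))) powr (k / \<theta>) \<le> (1 / a) powr (k / \<theta>)"
    using \<open>0 < v\<close> assms by (intro powr_mono2) auto
  moreover have "(v * exp (- (a * v))) powr (k / \<theta>) = u powr k * exp (- c * u powr \<theta>)"
    using assms by (simp add: powr_mult exp_powr_real v_def a_def powr_powr)
  moreover have "1 / a = k / (c * \<theta>)" by (simp add: a_def)
  ultimately show ?thesis by simp
qed

lemma powr_divide_mult_le_powr_mult_exp:
  fixes k c \<theta> K :: real
  assumes "1 \<le> k" "0 < c" "0 < \<theta>" "0 \<le> K"
  shows "(k / (c * \<theta>)) powr (k / \<theta>) * K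
    \<le> k powr (k / \<theta>) * exp ((\<bar>ln (c * \<theta>)\<bar> / \<theta> + K) * k)"
proof -
  have "(c * \<theta>) powr (k / \<theta>) = exp (ln (c * \<theta>) / \<theta> * k)"
    using assms by (simp add: powr_def)
  then have "(k / (c * \<theta>)) powr (k / \<theta>)
      = k powr (k / \<theta>) * exp (- ln (c * \<theta>) / \<theta> * k)"
    using assms by (subst powr_divide) (simp_all add: exp_minus divide_inverse)
  also have "\<dots> \<le> k powr (k / \<theta>) * exp (\<bar>ln (c * \<theta>)\<bar> / \<theta> * k)"
  proof -
    have "- ln (c * \<theta>) / \<theta> * k \<le> \<bar>ln (c * \<theta>)\<bar> / \<theta> * k"
      using assms by (intro mult_right_mono divide_right_mono) auto
    then show ?thesis by (intro mult_left_mono) auto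
  qed
  finally have power_le:
    "(k / (c * \<theta>)) powr (k / \<theta>) \<le> k powr (k / \<theta>) * exp (\<bar>ln (c * \<theta>)\<bar> / \<theta> * k)" .
  have "K \<le> exp K" using exp_ge_add_one_self[of K] by linarith
  also have "\<dots> \<le> exp (K * k)" using assms mult_left_mono[of 1 k K] by simp
  finally have "K \<le> exp (K * k)" .
  with power_le have "(k / (c * \<theta>)) powr (k / \<theta>) * K
      \<le> k powr (k / \<theta>) * exp (\<bar>ln (c * \<theta>)\<bar> / \<theta> * k) * exp (K * k)"
    using assms by (intro mult_mono) auto
  then show ?thesis by (simp add: distrib_right exp_add mult.assoc)
qed

lemma exists_powr_small_o_exponent:
  fixes f a :: "nat \<Rightarrow> real" and D :: real
  assumes "\<forall>\<^sub>F k in at_top.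
    real k powr a k * exp (- D * k) \<le> f k \<and> f k \<le> real k powr a k * exp (D * k)"
  shows "\<exists>r. r \<in> o(\<lambda>k. real k) \<and> (\<forall>\<^sub>F k in at_top. f k = real k powr (a k + r k))"
proof -
  define r where "r k = ln (f k) / ln (real k) - a k" for k
  have bounds: "\<forall>\<^sub>F k in at_top.
      0 < f k \<and> \<bar>ln (f k) - a k * ln (real k)\<bar> \<le> D * real k \<and> 2 \<le> k"
    using assms eventually_ge_at_top[of 2]
  proof eventually_elim
    case (elim k)
    have "0 < real k powr a k * exp (- D * k)" using elim by simp
    with elim have "0 < f k" by linarith
    have "ln (real k powr a k * exp (- D * k)) \<le> ln (f k)"
      "ln (f k) \<le> ln (real k powr a k * exp (D * k))"
      using elim \<open>0 < f k\<close> by simp_all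
    moreover have "ln (real k powr a k * exp (- D * k)) = a k * ln (real k) - D * k"
      "ln (real k powr a k * exp (D * k)) = a k * ln (real k) + D * k"
      using elim by (simp_all add: ln_mult ln_powr)
    ultimately have "\<bar>ln (f k) - a k * ln (real k)\<bar> \<le> D * real k"
      by linarith
    with elim \<open>0 < f k\<close> show ?case by simp
  qed
  have "r \<in> O(\<lambda>k. real k / ln (real k))"
  proof (rule bigoI[where c = D])
    show "\<forall>\<^sub>F k in at_top. norm (r k) \<le> D * norm (real k / ln (real k))"
      using bounds
    proof eventually_elim
      case (elim k)
      then have "0 < ln (real k)" by simp
      then have "\<bar>r k\<bar> = \<bar>ln (f k) - a k * ln (real k)\<bar> / ln (real k)"
        by (simp add: r_def field_simps)
      also have "\<dots> \<le> D * real k / ln (real k)"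
        using elim \<open>0 < ln (real k)\<close> by (simp add: divide_right_mono)
      finally show ?case using \<open>0 < ln (real k)\<close> by simp
    qed
  qed
  also have "(\<lambda>k. real k / ln (real k)) \<in> o(\<lambda>k. real k)" by real_asymp
  finally have "r \<in> o(\<lambda>k. real k)" .
  moreover have "\<forall>\<^sub>F k in at_top. f k = real k powr (a k + r k)"
    using bounds by eventually_elim (simp add: r_def powr_def)
  ultimately show ?thesis by blast
qed

lemma nn_integral_exp_less_top_of_tail:
  fixes Y :: "'a \<Rightarrow> real" and c C :: real
  assumes "finite_measure M" and [measurable]: "Y \<in> borel_measurable M"
    and "0 \<le> c" "c < C"
    and tail: "\<And>t. 1 \<le> t \<Longrightarrow> emeasure M {\<omega>\<in>space M. t \<le> Y \<omega>} \<le> ennreal (exp (- C * t))"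
  shows "(\<integral>\<^sup>+ \<omega>. ennreal (exp (c * Y \<omega>)) \<partial>M) < \<infinity>"
proof -
  interpret finite_measure M by fact
  define S where "S n = {\<omega>\<in>space M. real n + 1 \<le> Y \<omega>}" for n :: nat
  have [measurable]: "S n \<in> sets M" for n unfolding S_def by measurable
  define g where
    "g \<omega> = ennreal (exp c) + (\<Sum>n. ennreal (exp (c * (real n + 2))) * indicator (S n) \<omega>)"
    for \<omega>
  have "ennreal (exp (c * Y \<omega>)) \<le> g \<omega>" if "\<omega> \<in> space M" for \<omega>
  proof (cases "Y \<omega> < 1")
    case True
    then have "exp (c * Y \<omega>) \<le> exp c" using \<open>0 \<le> c\<close> by (simp add: mult_left_le)
    then show ?thesis unfolding g_def by (intro add_increasing2) auto
  next
    case False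
    define n where "n = nat \<lfloor>Y \<omega>\<rfloor> - 1"
    have "real n + 1 \<le> Y \<omega>" "Y \<omega> < real n + 2"
      using False by (auto simp: n_def) linarith+
    then have "\<omega> \<in> S n" using that by (simp add: S_def)
    have "ennreal (exp (c * Y \<omega>)) \<le> ennreal (exp (c * (real n + 2))) * indicator (S n) \<omega>"
      using \<open>\<omega> \<in> S n\<close> \<open>Y \<omega> < real n + 2\<close> \<open>0 \<le> c\<close> by (simp add: mult_left_mono)
    also have "\<dots> \<le> (\<Sum>m. ennreal (exp (c * (real m + 2))) * indicator (S m) \<omega>)"
      using sum_le_suminf[OF summableI, where I = "{n}"] by simp
    finally show ?thesis unfolding g_def by (intro add_increasing) auto
  qed
  then have "(\<integral>\<^sup>+ \<omega>. ennreal (exp (c * Y \<omega>)) \<partial>M) \<le> (\<integral>\<^sup>+ \<omega>. g \<omega> \<partial>M)"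
    by (intro nn_integral_mono) auto
  also have "\<dots> = ennreal (exp c) * emeasure M (space M) +
      (\<Sum>n. ennreal (exp (c * (real n + 2))) * emeasure M (S n))"
    by (simp add: g_def nn_integral_add nn_integral_suminf nn_integral_cmult_indicator)
  also have "(\<Sum>n. ennreal (exp (c * (real n + 2))) * emeasure M (S n))
      \<le> (\<Sum>n. ennreal (exp (2 * c - C) * exp (c - C) ^ n))"
  proof (intro suminf_le summableI)
    fix n
    have "emeasure M (S n) \<le> ennreal (exp (- C * (real n + 1)))"
      unfolding S_def by (rule tail) simp
    then have "ennreal (exp (c * (real n + 2))) * emeasure M (S n)
        \<le> ennreal (exp (c * (real n + 2)) * exp (- C * (real n + 1)))"
      by (simp add: ennreal_mult mult_left_mono)
    also have "exp (c * (real n + 2)) * exp (- C * (real n + 1))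
        = exp (2 * c - C) * exp (c - C) ^ n"
      by (simp flip: exp_add exp_of_nat_mult) (simp add: algebra_simps)
    finally show "ennreal (exp (c * (real n + 2))) * emeasure M (S n)
        \<le> ennreal (exp (2 * c - C) * exp (c - C) ^ n)" .
  qed
  also have "(\<Sum>n. ennreal (exp (2 * c - C) * exp (c - C) ^ n)) < \<infinity>"
  proof -
    have "summable (\<lambda>n. exp (2 * c - C) * exp (c - C) ^ n)"
      using \<open>c < C\<close> by (intro summable_mult summable_geometric) simp
    then show ?thesis by (simp add: less_top ennreal_suminf_neq_top)
  qed
  finally show ?thesis by (simp add: less_top ennreal_mult_eq_top_iff)
qed

lemma inverse_power_mult_emeasure_le_nn_integral:
  fixes X :: "'a \<Rightarrow> real"
  assumes "{\<omega>\<in>space M. X \<omega> \<le> \<epsilon>} \<in> sets M" "0 < \<epsilon>"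
  shows "ennreal (inverse \<epsilon> ^ k) * emeasure M {\<omega>\<in>space M. X \<omega> \<le> \<epsilon>}
    \<le> (\<integral>\<^sup>+ \<omega>. inverse (ennreal (X \<omega>)) ^ k \<partial>M)"
proof -
  have "ennreal (inverse \<epsilon> ^ k) * indicator {\<omega>\<in>space M. X \<omega> \<le> \<epsilon>} \<omega>
      \<le> inverse (ennreal (X \<omega>)) ^ k" for \<omega>
  proof (cases "0 < X \<omega> \<and> X \<omega> \<le> \<epsilon>")
    case True
    then have "ennreal (inverse \<epsilon>) \<le> inverse (ennreal (X \<omega>))"
      by (simp add: inverse_ennreal le_imp_inverse_le)
    then show ?thesis
      using \<open>0 < \<epsilon>\<close> by (simp add: ennreal_power[symmetric] power_mono indicator_def)
  qed (cases k, auto simp: indicator_def ennreal_neg)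
  then show ?thesis
    by (simp add: nn_integral_mono flip: nn_integral_cmult_indicator[OF assms(1)])
qed

lemma nn_integral_inverse_power_le:
  fixes X :: "'a \<Rightarrow> real" and k :: nat
  assumes [measurable]: "X \<in> borel_measurable M"
    and "AE \<omega> in M. 0 < X \<omega>" "0 < k" "0 < c" "0 < \<theta>"
  shows "(\<integral>\<^sup>+ \<omega>. inverse (ennreal (X \<omega>)) ^ k \<partial>M)
    \<le> ennreal ((k / (c * \<theta>)) powr (k / \<theta>))
        * (\<integral>\<^sup>+ \<omega>. ennreal (exp (c * inverse (X \<omega>) powr \<theta>)) \<partial>M)"
proof -
  have "inverse (ennreal x) ^ k
      \<le> ennreal ((k / (c * \<theta>)) powr (k / \<theta>)) * ennreal (exp (c * inverse x powr \<theta>))"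
    if "0 < x" for x :: real
  proof -
    have "inverse x powr k * exp (- c * inverse x powr \<theta>)
        \<le> (k / (c * \<theta>)) powr (k / \<theta>)"
      using that assms by (intro powr_mult_exp_neg_powr_le) auto
    then have "inverse x ^ k
        \<le> (k / (c * \<theta>)) powr (k / \<theta>) * exp (c * inverse x powr \<theta>)"
      using that by (simp add: powr_realpow exp_minus field_simps)
    then show ?thesis
      using that
      by (simp add: inverse_ennreal ennreal_power ennreal_mult[symmetric] ennreal_leI)
  qed
  then have "(\<integral>\<^sup>+ \<omega>. inverse (ennreal (X \<omega>)) ^ k \<partial>M)
      \<le> (\<integral>\<^sup>+ \<omega>. ennreal ((k / (c * \<theta>)) powr (k / \<theta>))
            * ennreal (exp (c * inverse (X \<omega>) powr \<theta>)) \<partial>M)"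
    using assms(2) by (intro nn_integral_mono_AE) (auto elim: AE_mp)
  then show ?thesis by (simp add: nn_integral_cmult)
qed

locale small_ball_estimate = prob_space M for M :: "'a measure" +
  fixes X :: "'a \<Rightarrow> real" and \<theta> C\<^sub>1 C\<^sub>2 :: real
  assumes measurable_X [measurable]: "X \<in> borel_measurable M"
    and theta_pos: "0 < \<theta>" and C\<^sub>2_pos: "0 < C\<^sub>2"
    and small_ball_lower:
      "\<And>\<epsilon>. 0 < \<epsilon> \<Longrightarrow> \<epsilon> \<le> 1 \<Longrightarrow>
        exp (- C\<^sub>1 * \<epsilon> powr - \<theta>) \<le> prob {\<omega>\<in>space M. X \<omega> \<le> \<epsilon>}"
    and small_ball_upper:
      "\<And>\<epsilon>. 0 < \<epsilon> \<Longrightarrow> \<epsilon> \<le> 1 \<Longrightarrow>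
        prob {\<omega>\<in>space M. X \<omega> \<le> \<epsilon>} \<le> exp (- C\<^sub>2 * \<epsilon> powr - \<theta>)"
begin

abbreviation \<eta> :: "nat \<Rightarrow> ennreal"
  where "\<eta> k \<equiv> \<integral>\<^sup>+ \<omega>. inverse (ennreal (X \<omega>)) ^ k \<partial>M"

lemma AE_pos: "AE \<omega> in M. 0 < X \<omega>"
proof -
  have "prob {\<omega>\<in>space M. X \<omega> \<le> 0} \<le> exp (- C\<^sub>2 * \<epsilon> powr - \<theta>)"
    if "0 < \<epsilon>" "\<epsilon> \<le> 1" for \<epsilon>
    using that by (intro order_trans[OF finite_measure_mono small_ball_upper]) auto
  moreover have "((\<lambda>\<epsilon>. exp (- C\<^sub>2 * \<epsilon> powr - \<theta>)) \<longlongrightarrow> 0) (at_right 0)"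
    using C\<^sub>2_pos theta_pos by real_asymp
  ultimately have "prob {\<omega>\<in>space M. X \<omega> \<le> 0} \<le> 0"
    by (intro tendsto_lowerbound[where F = "at_right 0"])
       (auto simp: eventually_at_right_field intro!: exI[of _ 1])
  then have "{\<omega>\<in>space M. X \<omega> \<le> 0} \<in> null_sets M"
    by (simp add: null_sets_def emeasure_eq_measure measure_nonneg antisym)
  then show ?thesis by (rule AE_I') auto
qed

lemma tail_inverse_powr:
  assumes "1 \<le> t"
  shows "emeasure M {\<omega>\<in>space M. t \<le> inverse (X \<omega>) powr \<theta>}
    \<le> ennreal (exp (- C\<^sub>2 * t))"
proof -
  define \<epsilon> where "\<epsilon> = t powr (- 1 / \<theta>)"
  have \<epsilon>: "0 < \<epsilon>" "\<epsilon> \<le> 1" "\<epsilon> powr - \<theta> = t"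
    using assms theta_pos powr_mono[of "- 1 / \<theta>" 0 t] by (auto simp: \<epsilon>_def powr_powr)
  have "X \<omega> \<le> \<epsilon>" if "t \<le> inverse (X \<omega>) powr \<theta>" for \<omega>
  proof (cases "0 < X \<omega>")
    case True
    have "(inverse (X \<omega>) powr \<theta>) powr (- 1 / \<theta>) \<le> \<epsilon>"
      unfolding \<epsilon>_def using that assms theta_pos True by (intro powr_mono2') auto
    then show ?thesis
      using theta_pos True by (simp add: powr_powr powr_minus)
  qed (use \<epsilon>(1) in simp)
  then have "prob {\<omega>\<in>space M. t \<le> inverse (X \<omega>) powr \<theta>}
      \<le> prob {\<omega>\<in>space M. X \<omega> \<le> \<epsilon>}"
    by (intro finite_measure_mono) auto
  also have "\<dots> \<le> exp (- C\<^sub>2 * t)"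
    using small_ball_upper[OF \<epsilon>(1,2)] by (simp add: \<epsilon>(3))
  finally show ?thesis by (simp add: emeasure_eq_measure)
qed

lemma exp_moment_finite:
  assumes "0 \<le> c" "c < C\<^sub>2"
  shows "(\<integral>\<^sup>+ \<omega>. ennreal (exp (c * inverse (X \<omega>) powr \<theta>)) \<partial>M) < \<infinity>"
  using assms tail_inverse_powr
  by (intro nn_integral_exp_less_top_of_tail[where C = C\<^sub>2])
     (auto intro: finite_measure_axioms)

lemma negative_moment_ge:
  fixes k :: nat
  assumes "1 \<le> k"
  shows "ennreal (k powr (k / \<theta>) * exp (- C\<^sub>1 * k)) \<le> \<eta> k"
proof -
  define \<epsilon> where "\<epsilon> = k powr (- 1 / \<theta>)"
  have \<epsilon>: "0 < \<epsilon>" "\<epsilon> \<le> 1" "\<epsilon> powr - \<theta> = k"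
    using assms theta_pos powr_mono[of "- 1 / \<theta>" 0 k] by (auto simp: \<epsilon>_def powr_powr)
  have "inverse \<epsilon> = k powr (1 / \<theta>)"
    using assms by (simp add: \<epsilon>_def powr_minus_divide powr_minus)
  then have "inverse \<epsilon> ^ k = k powr (k / \<theta>)"
    using assms by (simp add: powr_powr flip: powr_realpow)
  have "ennreal (k powr (k / \<theta>) * exp (- C\<^sub>1 * k))
      \<le> ennreal (inverse \<epsilon> ^ k * prob {\<omega>\<in>space M. X \<omega> \<le> \<epsilon>})"
    using small_ball_lower[OF \<epsilon>(1,2)] \<epsilon> \<open>inverse \<epsilon> ^ k = _\<close>
    by (intro ennreal_leI) (auto intro!: mult_left_mono)
  also have "\<dots> \<le> \<eta> k"
    using inverse_power_mult_emeasure_le_nn_integral[of M X \<epsilon> k] \<epsilon>(1)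
    by (simp add: emeasure_eq_measure ennreal_mult)
  finally show ?thesis .
qed

lemma negative_moment_le:
  obtains D :: real where "\<And>k. 1 \<le> k \<Longrightarrow> \<eta> k \<le> ennreal (k powr (k / \<theta>) * exp (D * k))"
proof -
  define c where "c = C\<^sub>2 / 2"
  have c: "0 < c" "c < C\<^sub>2" using C\<^sub>2_pos by (simp_all add: c_def)
  define K where "K = enn2real (\<integral>\<^sup>+ \<omega>. ennreal (exp (c * inverse (X \<omega>) powr \<theta>)) \<partial>M)"
  have K: "(\<integral>\<^sup>+ \<omega>. ennreal (exp (c * inverse (X \<omega>) powr \<theta>)) \<partial>M) = ennreal K"
    "0 \<le> K" using exp_moment_finite[of c] c by (simp_all add: K_def less_top ennreal_enn2real_if)
  show thesis
  proof (rule that[of "\<bar>ln (c * \<theta>)\<bar> / \<theta> + K"])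
    fix k :: nat assume "1 \<le> k"
    have "\<eta> k \<le> ennreal ((k / (c * \<theta>)) powr (k / \<theta>) * K)"
      using nn_integral_inverse_power_le[OF measurable_X AE_pos, of k c \<theta>]
        \<open>1 \<le> k\<close> c theta_pos K
      by (simp add: ennreal_mult)
    also have "\<dots> \<le> ennreal (k powr (k / \<theta>) * exp ((\<bar>ln (c * \<theta>)\<bar> / \<theta> + K) * k))"
      using \<open>1 \<le> k\<close> c theta_pos K
      by (intro ennreal_leI powr_divide_mult_le_powr_mult_exp) simp_all
    finally show "\<eta> k \<le> ennreal (k powr (k / \<theta>) * exp ((\<bar>ln (c * \<theta>)\<bar> / \<theta> + K) * k))" .
  qed
qed

theorem negative_moment_asymptotics:
  "\<exists>r. r \<in> o(\<lambda>k. real k) \<and> (\<forall>\<^sub>F k in at_top. \<eta> k = ennreal (k powr (k / \<theta> + r k)))"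
proof -
  obtain D :: real where upper: "\<And>k. 1 \<le> k \<Longrightarrow> \<eta> k \<le> ennreal (k powr (k / \<theta>) * exp (D * k))"
    using negative_moment_le by blast
  define E where "E = max D \<bar>C\<^sub>1\<bar>"
  define f where "f k = enn2real (\<eta> k)" for k
  have bounds: "\<eta> k = ennreal (f k) \<and>
      k powr (k / \<theta>) * exp (- E * k) \<le> f k \<and> f k \<le> k powr (k / \<theta>) * exp (E * k)"
    if "1 \<le> k" for k :: nat
  proof -
    have "exp (- E * k) \<le> exp (- C\<^sub>1 * k)"
      using mult_right_mono[of C\<^sub>1 E k] by (simp add: E_def)
    then have "ennreal (k powr (k / \<theta>) * exp (- E * k))
        \<le> ennreal (k powr (k / \<theta>) * exp (- C\<^sub>1 * k))"
      by (intro ennreal_leI mult_left_mono) auto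
    also have "\<dots> \<le> \<eta> k"
      using that by (rule negative_moment_ge)
    finally have lower: "ennreal (k powr (k / \<theta>) * exp (- E * k)) \<le> \<eta> k" .
    have "\<eta> k \<le> ennreal (k powr (k / \<theta>) * exp (E * k))"
      using upper[OF that] mult_right_mono[of D E k]
      by (elim order_trans) (auto simp: E_def intro!: ennreal_leI mult_left_mono)
    then obtain x where x: "\<eta> k = ennreal x" "0 \<le> x"
      by (cases "\<eta> k") (auto simp: top_unique)
    with lower \<open>_ \<le> ennreal (k powr (k / \<theta>) * exp (E * k))\<close> show ?thesis
      by (simp add: f_def ennreal_le_iff)
  qed
  then have "\<forall>\<^sub>F k in at_top.
      real k powr (k / \<theta>) * exp (- E * k) \<le> f k \<and> f k \<le> k powr (k / \<theta>) * exp (E * k)"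
    by (intro eventually_at_top_linorderI[of 1]) blast
  then obtain r where r: "r \<in> o(\<lambda>k. real k)" "\<forall>\<^sub>F k in at_top. f k = k powr (k / \<theta> + r k)"
    using exists_powr_small_o_exponent[of "\<lambda>k. k / \<theta>" E f] by blast
  from r(2) eventually_ge_at_top[of 1]
  have "\<forall>\<^sub>F k in at_top. \<eta> k = ennreal (k powr (k / \<theta> + r k))"
    by eventually_elim (use bounds in simp)
  with r(1) show ?thesis by blast
qed

end

theorem lemma2p4:
  fixes M :: "'a measure" and B :: "real \<Rightarrow> 'a \<Rightarrow> real"
    and N :: "(real \<Rightarrow> real) \<Rightarrow> real"
    and H \<gamma> \<theta> C\<^sub>1 C\<^sub>2 :: real
  assumes "0 < H" "H < 1"
    and "fbm M H B"
    and "0 < \<gamma>" "\<gamma> < H"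
    and "\<forall>\<omega>\<in>space M. path01 B \<omega> \<in> holder0 \<gamma>"
    and "is_norm_on (holder0 \<gamma>) N"
    and "(\<lambda>\<omega>. N (path01 B \<omega>)) \<in> borel_measurable M"
    and "\<theta> > 0" "C\<^sub>1 > 0" "C\<^sub>2 > 0"
    and "\<forall>\<epsilon>\<in>{0<..1}.
           - C\<^sub>1 * \<epsilon> powr (-\<theta>) \<le> ln (measure M {\<omega>\<in>space M. N (path01 B \<omega>) \<le> \<epsilon>}) \<and>
           ln (measure M {\<omega>\<in>space M. N (path01 B \<omega>) \<le> \<epsilon>}) \<le> - C\<^sub>2 * \<epsilon> powr (-\<theta>)"
  shows "\<exists>r :: nat \<Rightarrow> real. r \<in> o(\<lambda>k. real k) \<and>
           (\<forall>\<^sub>F k in at_top.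
              (\<integral>\<^sup>+ \<omega>. inverse (ennreal (N (path01 B \<omega>)) ^ k) \<partial>M)
                = ennreal (real k powr (real k / \<theta> + r k)))"
proof -
  have "prob_space M" using \<open>fbm M H B\<close> by (simp add: fbm_def)
  have small_ball:
    "exp (- C\<^sub>1 * \<epsilon> powr - \<theta>) \<le> measure M {\<omega>\<in>space M. N (path01 B \<omega>) \<le> \<epsilon>} \<and>
      measure M {\<omega>\<in>space M. N (path01 B \<omega>) \<le> \<epsilon>} \<le> exp (- C\<^sub>2 * \<epsilon> powr - \<theta>)"
    if "0 < \<epsilon>" "\<epsilon> \<le> 1" for \<epsilon>
  proof -
    define p where "p = measure M {\<omega>\<in>space M. N (path01 B \<omega>) \<le> \<epsilon>}"
    have "- C\<^sub>1 * \<epsilon> powr - \<theta> \<le> ln p" "ln p \<le> - C\<^sub>2 * \<epsilon> powr - \<theta>"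
      using assms(12) that by (auto simp: p_def)
    \<comment> \<open>\<open>ln 0 = 0\<close> in Isabelle, so the strictly negative upper bound rules out \<open>p = 0\<close>.\<close>
    moreover have "0 < p"
    proof -
      have "0 < C\<^sub>2 * \<epsilon> powr - \<theta>" using \<open>0 < C\<^sub>2\<close> \<open>0 < \<epsilon>\<close> by simp
      then have "p \<noteq> 0" using \<open>ln p \<le> _\<close> by auto
      then show ?thesis by (simp add: p_def less_le)
    qed
    ultimately show ?thesis
      by (simp flip: p_def) (metis exp_le_cancel_iff exp_ln)
  qed
  interpret small_ball_estimate M "\<lambda>\<omega>. N (path01 B \<omega>)" \<theta> C\<^sub>1 C\<^sub>2
    using \<open>prob_space M\<close> small_ball assms(8,9,11)
    by (intro small_ball_estimate.intro small_ball_estimate_axioms.intro) simp_all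
  show ?thesis
    unfolding ennreal_inverse_power using negative_moment_asymptotics .
qed

end
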